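(* Let $T(z)=z/(1-z)$ and, for a plane binary tree $t$, let $S_t(z)$ and its dominant singularity $\tilde\rho=\tilde\rho(t)$ be as in the context. Then for every $\eta>0$ there is $D>0$ independent of $n$ such that \[ \frac{[z^n]S_t(z)}{[z^n]T(z)} = \tilde\rho^{-n-1}\left(1+\mathcal{O}\!\left(\frac{\ln n}{n^{1-\eta}}\right)\right)\quad\text{as } n\to\infty, \] uniformly for all plane binary trees $t$ with $D\le |t|\le n$.
   Context: A plane binary tree is a rooted tree in which each node has a left and a right slot, each empty or holding a subtree; $|t|$ is its number of nodes. A plane increasing binary tree of size $n$ is such a tree whose $n$ nodes are labeled $1,\dots,n$ increasingly along every path from the root; their exponential generating function is $T(z)=z/(1-z)$. A fringe subtree is a node with all its descendants; its shape is obtained by forgetting labels. For $t$ with $k$ nodes, $w(t)=\ell(t)/k!$ where $\ell(t)$ is the number of increasing labelings of $t$. $S_t$ is the exponential generating function of plane increasing binary trees with no fringe subtree of shape $t$, the power series solution of $S_t'=(1+S_t)^2-w(t)kz^{k-1}$, $S_t(0)=0$; one has $S_t=-u'/u$ with $u$ the entire solution of $u''-2u'+(1-w(t)kz^{k-1})u=0$, $u(0)=-1$, $u'(0)=0$, and $\tilde\rho>1$ is the smallest positive zero of $u$. *)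

theory Defs
  imports "HOL-Analysis.Analysis" "HOL-Computational_Algebra.Formal_Power_Series"
          "HOL-Library.FuncSet" "HOL-Library.Sublist"
begin

text \<open>Plane binary trees: Leaf is an empty slot, Node l r a node with left/right slots.\<close>
datatype ptree = Leaf | Node ptree ptree

fun tsize :: "ptree \<Rightarrow> nat" where
  "tsize Leaf = 0"
| "tsize (Node l r) = Suc (tsize l + tsize r)"

fun positions :: "ptree \<Rightarrow> bool list set" where
  "positions Leaf = {}"
| "positions (Node l r) = insert [] ((\<lambda>p. False # p) ` positions l \<union> (\<lambda>p. True # p) ` positions r)"

definition nlab :: "ptree \<Rightarrow> nat" where
  "nlab t = card {f. f \<in> positions t \<rightarrow>\<^sub>E {1..tsize t} \<and>
                     bij_betw f (positions t) {1..tsize t} \<and>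
                     (\<forall>p\<in>positions t. \<forall>q\<in>positions t. strict_prefix p q \<longrightarrow> f p < f q)}"

definition wt :: "ptree \<Rightarrow> real" where
  "wt t = real (nlab t) / fact (tsize t)"

definition T_fps :: "real fps" where
  "T_fps = fps_X / (1 - fps_X)"

definition S_fps :: "ptree \<Rightarrow> real fps" where
  "S_fps t = (THE S. fps_nth S 0 = 0 \<and>
      fps_deriv S = (1 + S)^2 - fps_const (wt t * real (tsize t)) * fps_X ^ (tsize t - 1))"

definition u_sol :: "ptree \<Rightarrow> real \<Rightarrow> real" where
  "u_sol t = (THE u. u 0 = -1 \<and> (\<exists>u'. u' 0 = 0 \<and> (\<forall>x.
      (u has_real_derivative u' x) (at x) \<and>
      (u' has_real_derivative
          (2 * u' x - (1 - wt t * real (tsize t) * x ^ (tsize t - 1)) * u x)) (at x))))"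

definition rho :: "ptree \<Rightarrow> real" where
  "rho t = (THE r. 0 < r \<and> u_sol t r = 0 \<and> (\<forall>x. 0 < x \<and> x < r \<longrightarrow> u_sol t x \<noteq> 0))"

end

(*
  Let k = |t| and e = w(t) k.  The substitution u = exp(z) V turns the equation for u into
  V'' = e z^(k-1) V with V(0) = -1, V'(0) = 1, so that S_t = -1 - V'/V and rho~ is the first
  positive zero of V.  Splitting increasing labelings at the root gives w(t) <= (3/2) (2/3)^k,
  hence e (4/3)^k -> 0, and for large k the series V stays within 1/100 of z - 1 (and V' within
  1/100 of 1) on the disc |z| <= 5/4.  There V has the single simple zero rho~, close to 1, and
  -V'/V - 1/(rho~ - z) is holomorphic and bounded by 15 on |z| = 23/20.  Cauchy's inequality gives
  [z^n] S_t = rho~^(-n-1) + O((20/23)^n) uniformly in t, an exponentially small relative error,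
  while [z^n] T = 1 for n >= 1.
*)

theory Submission
  imports Defs "HOL-Complex_Analysis.Complex_Analysis" "HOL-Real_Asymp.Real_Asymp"
begin

section \<open>Increasing labelings\<close>

lemma finite_positions [simp]: "finite (positions t)"
  by (induction t) auto

lemma card_positions: "card (positions t) = tsize t"
proof (induction t)
  case (Node l r)
  have "card ((#) False ` positions l \<union> (#) True ` positions r) = tsize l + tsize r"
    using Node by (subst card_Un_disjoint) (auto simp: card_image)
  then show ?case by (auto simp: card_insert_if)
qed simp

definition increasing_labelings :: "ptree \<Rightarrow> nat set \<Rightarrow> (bool list \<Rightarrow> nat) set" where
  "increasing_labelings t S = {f. f \<in> positions t \<rightarrow>\<^sub>E S \<and> bij_betw f (positions t) S \<and>
     (\<forall>p\<in>positions t. \<forall>q\<in>positions t. strict_prefix p q \<longrightarrow> f p < f q)}"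

lemma nlab_eq_card_increasing_labelings: "nlab t = card (increasing_labelings t {1..tsize t})"
  by (simp add: nlab_def increasing_labelings_def)

lemma finite_increasing_labelings: "finite S \<Longrightarrow> finite (increasing_labelings t S)"
  unfolding increasing_labelings_def
  by (rule finite_subset[OF _ finite_PiE[of "positions t" "\<lambda>_. S"]]) auto

lemma increasing_labeling_root:
  assumes "finite S" and f: "f \<in> increasing_labelings (Node l r) S"
  shows "f [] = Min S"
proof (rule Min_eqI[symmetric])
  have bij: "bij_betw f (positions (Node l r)) S"
    and inc: "\<forall>p\<in>positions (Node l r). \<forall>q\<in>positions (Node l r). strict_prefix p q \<longrightarrow> f p < f q"
    using f by (auto simp: increasing_labelings_def)
  show "f [] \<in> S" using bij by (auto simp: bij_betw_def)
  fix s assume "s \<in> S"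
  then obtain p where p: "p \<in> positions (Node l r)" "s = f p"
    using bij by (auto simp: bij_betw_def)
  show "f [] \<le> s"
  proof (cases p)
    case (Cons b p')
    then have "strict_prefix [] p" by (simp add: strict_prefix_def)
    then show ?thesis using inc p by force
  qed (use p in simp)
qed fact

lemma increasing_labeling_restrict:
  assumes f: "f \<in> increasing_labelings t S" and sub: "(#) c ` positions t' \<subseteq> positions t"
  shows "restrict (\<lambda>p. f (c # p)) (positions t') \<in> increasing_labelings t' (f ` (#) c ` positions t')"
proof -
  have inj: "inj_on f (positions t)" and inc: "\<forall>p\<in>positions t. \<forall>q\<in>positions t. strict_prefix p q \<longrightarrow> f p < f q"
    using f by (auto simp: increasing_labelings_def bij_betw_def)
  have "inj_on (f \<circ> (#) c) (positions t')"
    using comp_inj_on[OF _ inj_on_subset[OF inj sub]] by simp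
  then have "bij_betw (\<lambda>p. f (c # p)) (positions t') (f ` (#) c ` positions t')"
    by (simp add: bij_betw_def image_image comp_def)
  moreover have "c # p \<in> positions t" if "p \<in> positions t'" for p
    using sub that by auto
  ultimately show ?thesis
    using inc unfolding increasing_labelings_def
    by (simp add: restrict_PiE_iff strict_prefix_simps)
qed

lemma increasing_labeling_Node_image:
  assumes S: "finite S" and f: "f \<in> increasing_labelings (Node l r) S"
  defines "A \<equiv> f ` (#) False ` positions l"
  shows "A \<subseteq> S - {Min S}" "card A = tsize l" "f ` (#) True ` positions r = S - {Min S} - A"
proof -
  have bij: "bij_betw f (positions (Node l r)) S"
    using f by (simp add: increasing_labelings_def)
  then have inj: "inj_on f (positions (Node l r))"
    and img: "f ` positions (Node l r) = S" by (auto simp: bij_betw_def)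
  have root: "f [] = Min S" by (rule increasing_labeling_root[OF S f])
  have "f ` (#) True ` positions r = f ` (positions (Node l r) - insert [] ((#) False ` positions l))"
    by (rule arg_cong[where f = "image f"]) auto
  also have "\<dots> = f ` positions (Node l r) - f ` insert [] ((#) False ` positions l)"
    by (rule inj_on_image_set_diff[OF inj]) auto
  also have "\<dots> = S - insert (Min S) A"
    by (simp only: img image_insert root A_def)
  finally show "f ` (#) True ` positions r = S - {Min S} - A" by blast
  have "f [] \<notin> f ` (#) False ` positions l"
    by (subst inj_on_image_mem_iff[OF inj]) auto
  then have "Min S \<notin> A" using root by (simp add: A_def)
  moreover have "A \<subseteq> S"
    unfolding A_def img[symmetric] by (intro image_mono) auto
  ultimately show "A \<subseteq> S - {Min S}" by blast
  have "inj_on f ((#) False ` positions l)" by (rule inj_on_subset[OF inj]) auto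
  then show "card A = tsize l"
    by (simp add: A_def card_image card_positions)
qed

lemma increasing_labeling_eqI:
  assumes S: "finite S" and f: "f \<in> increasing_labelings (Node l r) S"
    and g: "g \<in> increasing_labelings (Node l r) S"
    and left: "\<And>p. p \<in> positions l \<Longrightarrow> f (False # p) = g (False # p)"
    and right: "\<And>p. p \<in> positions r \<Longrightarrow> f (True # p) = g (True # p)"
  shows "f = g"
proof (rule PiE_ext)
  show "f \<in> positions (Node l r) \<rightarrow>\<^sub>E S" "g \<in> positions (Node l r) \<rightarrow>\<^sub>E S"
    using f g by (simp_all add: increasing_labelings_def)
  have "f [] = g []"
    using increasing_labeling_root[OF S f] increasing_labeling_root[OF S g] by simp
  then show "f p = g p" if "p \<in> positions (Node l r)" for p
    using that left right by auto
qed

lemma card_increasing_labelings_Node_le: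
  assumes S: "finite S"
  defines "S' \<equiv> S - {Min S}"
  shows "card (increasing_labelings (Node l r) S)
    \<le> (\<Sum>A | A \<subseteq> S' \<and> card A = tsize l.
          card (increasing_labelings l A) * card (increasing_labelings r (S' - A)))"
proof -
  let ?AA = "{A. A \<subseteq> S' \<and> card A = tsize l}"
  let ?L = "increasing_labelings (Node l r) S"
  define children where "children f = (restrict (\<lambda>p. f (False # p)) (positions l),
                                 restrict (\<lambda>p. f (True # p)) (positions r))" for f :: "bool list \<Rightarrow> nat"
  have fin: "finite S'" "finite ?AA"
    using S by (simp_all add: S'_def)
  have "children ` ?L \<subseteq> (\<Union>A\<in>?AA. increasing_labelings l A \<times> increasing_labelings r (S' - A))"
  proof
    fix x assume "x \<in> children ` ?L"
    then obtain f where f: "f \<in> ?L" and x: "x = children f" by blast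
    note img = increasing_labeling_Node_image[OF S f, folded S'_def]
    have "fst x \<in> increasing_labelings l (f ` (#) False ` positions l)"
      unfolding x children_def fst_conv by (rule increasing_labeling_restrict[OF f]) auto
    moreover have "snd x \<in> increasing_labelings r (S' - f ` (#) False ` positions l)"
      unfolding x children_def snd_conv img(3)[symmetric] by (rule increasing_labeling_restrict[OF f]) auto
    ultimately show "x \<in> (\<Union>A\<in>?AA. increasing_labelings l A \<times> increasing_labelings r (S' - A))"
      using img(1,2) by (intro UN_I[of "f ` (#) False ` positions l"]) (auto simp: mem_Times_iff)
  qed
  moreover have "inj_on children ?L"
    by (rule inj_onI, rule increasing_labeling_eqI[OF S])
       (auto simp: children_def fun_eq_iff restrict_def split: if_splits)
  moreover have "finite (\<Union>A\<in>?AA. increasing_labelings l A \<times> increasing_labelings r (S' - A))"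
    using fin by (auto intro!: finite_increasing_labelings intro: rev_finite_subset)
  ultimately have "card ?L \<le> card (\<Union>A\<in>?AA. increasing_labelings l A \<times> increasing_labelings r (S' - A))"
    by (subst card_image[symmetric]) (auto intro: card_mono)
  also have "\<dots> \<le> (\<Sum>A\<in>?AA. card (increasing_labelings l A \<times> increasing_labelings r (S' - A)))"
    by (rule card_UN_le[OF fin(2)])
  finally show ?thesis by (simp add: card_cartesian_product)
qed

lemma two_thirds_power_pred_le:
  "(2/3::real) ^ (a - 1) * (2/3) ^ (b - 1) \<le> real (Suc (a + b)) * (2/3) ^ (a + b)"
proof (cases a; cases b)
  assume "a = 0" "b = 0"
  then show ?thesis by simp
next
  fix b' assume ab: "a = 0" "b = Suc b'"
  then have "(2/3::real) ^ (a - 1) * (2/3) ^ (b - 1) = 3/2 * (2/3) ^ (a + b)"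
    by simp
  also have "\<dots> \<le> real (Suc (a + b)) * (2/3) ^ (a + b)"
    using ab by (intro mult_right_mono) auto
  finally show ?thesis .
next
  fix a' assume ab: "a = Suc a'" "b = 0"
  then have "(2/3::real) ^ (a - 1) * (2/3) ^ (b - 1) = 3/2 * (2/3) ^ (a + b)"
    by simp
  also have "\<dots> \<le> real (Suc (a + b)) * (2/3) ^ (a + b)"
    using ab by (intro mult_right_mono) auto
  finally show ?thesis .
next
  fix a' b' assume ab: "a = Suc a'" "b = Suc b'"
  then have "(2/3::real) ^ (a - 1) * (2/3) ^ (b - 1) = 9/4 * (2/3) ^ (a + b)"
    by (simp add: power_add)
  also have "\<dots> \<le> real (Suc (a + b)) * (2/3) ^ (a + b)"
    using ab by (intro mult_right_mono) auto
  finally show ?thesis .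
qed

lemma choose_fact_two_thirds_le:
  "real ((a + b) choose a) * (fact a * (2/3) ^ (a - 1)) * (fact b * (2/3) ^ (b - 1))
     \<le> fact (Suc (a + b)) * (2/3) ^ (a + b)"
proof -
  have binom: "real ((a + b) choose a) * fact a * fact b = fact (a + b)"
  proof -
    have "fact a * fact b * ((a + b) choose a) = (fact (a + b) :: nat)"
      using binomial_fact_lemma[of a "a + b"] by simp
    then have "real (fact a * fact b * ((a + b) choose a)) = real (fact (a + b))"
      by (rule arg_cong)
    then show ?thesis by (simp only: of_nat_mult of_nat_fact mult_ac)
  qed
  have "real ((a + b) choose a) * (fact a * (2/3) ^ (a - 1)) * (fact b * (2/3) ^ (b - 1))
      = (real ((a + b) choose a) * fact a * fact b) * ((2/3) ^ (a - 1) * (2/3) ^ (b - 1))"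
    by (simp only: mult_ac)
  also have "\<dots> \<le> fact (a + b) * (real (Suc (a + b)) * (2/3) ^ (a + b))"
    unfolding binom by (rule mult_left_mono[OF two_thirds_power_pred_le]) simp
  also have "\<dots> = fact (Suc (a + b)) * (2/3) ^ (a + b)"
    by (simp only: fact_Suc mult_ac)
  finally show ?thesis .
qed

lemma card_increasing_labelings_le:
  "finite S \<Longrightarrow> card S = tsize t
    \<Longrightarrow> real (card (increasing_labelings t S)) \<le> fact (card S) * (2/3) ^ (card S - 1)"
proof (induction t arbitrary: S)
  case Leaf
  then have sub: "increasing_labelings Leaf S \<subseteq> {\<lambda>_. undefined}"
    by (auto simp: increasing_labelings_def)
  have "card (increasing_labelings Leaf S) \<le> card {\<lambda>_. undefined}"
    using card_mono[OF _ sub] by simp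
  then show ?case using Leaf by simp
next
  case (Node l r)
  define S' where "S' = S - {Min S}"
  let ?AA = "{A. A \<subseteq> S' \<and> card A = tsize l}"
  have "S \<noteq> {}" using Node.prems by auto
  then have "Min S \<in> S" using Node.prems(1) by simp
  then have S': "finite S'" "card S' = tsize l + tsize r"
    using Node.prems by (simp_all add: S'_def)
  have "real (card (increasing_labelings (Node l r) S))
      \<le> (\<Sum>A\<in>?AA. real (card (increasing_labelings l A)) * real (card (increasing_labelings r (S' - A))))"
    using card_increasing_labelings_Node_le[OF Node.prems(1), of l r, folded S'_def]
    by (simp flip: of_nat_mult of_nat_sum)
  also have "\<dots> \<le> (\<Sum>A\<in>?AA. (fact (tsize l) * (2/3) ^ (tsize l - 1)) * (fact (tsize r) * (2/3) ^ (tsize r - 1)))"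
  proof (rule sum_mono, rule mult_mono)
    fix A assume "A \<in> ?AA"
    then have A: "finite A" "card A = tsize l" "card (S' - A) = tsize r"
      using S' rev_finite_subset[OF S'(1)] by (auto simp: card_Diff_subset)
    show "real (card (increasing_labelings l A)) \<le> fact (tsize l) * (2/3) ^ (tsize l - 1)"
      using Node.IH(1)[of A] A by simp
    show "real (card (increasing_labelings r (S' - A))) \<le> fact (tsize r) * (2/3) ^ (tsize r - 1)"
      using Node.IH(2)[of "S' - A"] A S' by simp
  qed simp_all
  also have "\<dots> = real ((tsize l + tsize r) choose tsize l) * (fact (tsize l) * (2/3) ^ (tsize l - 1))
      * (fact (tsize r) * (2/3) ^ (tsize r - 1))"
    using n_subsets[OF S'(1), of "tsize l"] S'(2) by simp
  also have "\<dots> \<le> fact (Suc (tsize l + tsize r)) * (2/3) ^ (tsize l + tsize r)"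
    by (rule choose_fact_two_thirds_le)
  also have "\<dots> = fact (card S) * (2/3) ^ (card S - 1)"
    using Node.prems(2) by simp
  finally show ?case .
qed

lemma wt_nonneg: "wt t \<ge> 0"
  by (simp add: wt_def)

lemma wt_le: "wt t \<le> 3/2 * (2/3) ^ tsize t"
proof -
  have "real (nlab t) \<le> fact (tsize t) * (2/3) ^ (tsize t - 1)"
    using card_increasing_labelings_le[of "{1..tsize t}" t]
    by (simp add: nlab_eq_card_increasing_labelings)
  also have "(2/3::real) ^ (tsize t - 1) \<le> 3/2 * (2/3) ^ tsize t"
    by (cases "tsize t") auto
  finally show ?thesis
    by (simp add: wt_def divide_simps mult.commute)
qed

section \<open>The entire function V\<close>

(* Coefficients of V = exp(-z) u, where u'' - 2u' + (1 - e z^(k-1)) u = 0 becomes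
   V'' = e z^(k-1) V; here e = w(t) k. *)
fun V_coeff :: "nat \<Rightarrow> real \<Rightarrow> nat \<Rightarrow> real" where
  "V_coeff k e 0 = -1"
| "V_coeff k e (Suc 0) = 1"
| "V_coeff k e (Suc (Suc j)) =
     (if k \<le> Suc j then e * V_coeff k e (Suc j - k) / (real (Suc (Suc j)) * real (Suc j)) else 0)"

definition V_fps :: "nat \<Rightarrow> real \<Rightarrow> 'a::real_algebra_1 fps" where
  "V_fps k e = Abs_fps (\<lambda>n. of_real (V_coeff k e n))"

lemma V_fps_nth [simp]: "fps_nth (V_fps k e) n = of_real (V_coeff k e n)"
  by (simp add: V_fps_def)

lemma V_fps_ode:
  assumes "k \<ge> 1"
  shows "fps_deriv (fps_deriv (V_fps k e :: 'a::{real_algebra_1,comm_ring_1} fps))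
           = fps_const (of_real e) * fps_X ^ (k - 1) * V_fps k e"
proof (rule fps_ext)
  fix j
  have "fps_nth (fps_deriv (fps_deriv (V_fps k e :: 'a fps))) j
      = of_real (real (Suc j) * real (Suc (Suc j)) * V_coeff k e (Suc (Suc j)))"
    by (simp add: algebra_simps)
  also have "real (Suc j) * real (Suc (Suc j)) * V_coeff k e (Suc (Suc j))
      = (if k \<le> Suc j then e * V_coeff k e (Suc j - k) else 0)"
    by simp
  also have "of_real \<dots> = fps_nth (fps_const (of_real e) * fps_X ^ (k - 1) * V_fps k e :: 'a fps) j"
    using assms by (auto simp: mult.assoc fps_X_power_mult_nth Suc_diff_le)
  finally show "fps_nth (fps_deriv (fps_deriv (V_fps k e :: 'a fps))) j
      = fps_nth (fps_const (of_real e) * fps_X ^ (k - 1) * V_fps k e) j" .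
qed

lemma V_coeff_Suc_Suc_weighted:
  assumes "k \<le> Suc j" "e \<ge> 0" "q > 0"
  shows "\<bar>V_coeff k e (Suc (Suc j))\<bar> * q ^ Suc (Suc j) =
         e * q ^ (k + 1) * (\<bar>V_coeff k e (Suc j - k)\<bar> * q ^ (Suc j - k))
           / (real (Suc (Suc j)) * real (Suc j))"
proof -
  have "k + 1 + (Suc j - k) = Suc (Suc j)" using assms(1) by simp
  then have "q ^ Suc (Suc j) = q ^ (k + 1) * q ^ (Suc j - k)" by (metis power_add)
  then show ?thesis
    using assms by (simp add: abs_mult abs_divide algebra_simps)
qed

lemma V_coeff_weighted_le:
  assumes "q \<ge> 1" "e \<ge> 0" "e * q ^ (k + 1) \<le> 2"
  shows "\<bar>V_coeff k e i\<bar> * q ^ i \<le> q"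
proof (induction i rule: less_induct)
  case (less i)
  consider "i = 0" | "i = 1" | j where "i = Suc (Suc j)"
    by (metis One_nat_def not0_implies_Suc)
  then show ?case
  proof cases
    case (3 j)
    show ?thesis
    proof (cases "k \<le> Suc j")
      case True
      have "e * q ^ (k + 1) * (\<bar>V_coeff k e (Suc j - k)\<bar> * q ^ (Suc j - k)) \<le> 2 * q"
        by (intro mult_mono assms(3) less.IH) (use assms 3 in auto)
      moreover have "real (Suc (Suc j)) * real (Suc j) \<ge> 2"
        using mult_mono[of 2 "real (Suc (Suc j))" 1 "real (Suc j)"] by simp
      ultimately show ?thesis
        using V_coeff_Suc_Suc_weighted[OF True assms(2)] assms(1) 3
        by (simp add: divide_le_eq)
    qed (use assms 3 in simp)
  qed (use assms in simp_all)
qed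

lemma V_coeff_weighted_bounded:
  assumes "q > 0" "e \<ge> 0"
  obtains M where "\<And>i. \<bar>V_coeff k e i\<bar> * q ^ i \<le> M"
proof
  \<comment> \<open>beyond J the recursion multiplies by e q^(k+1) / ((j+2)(j+1)) \<le> 1\<close>
  define J where "J = nat \<lceil>e * q ^ (k + 1)\<rceil> + 2"
  define M where "M = (\<Sum>i<J. \<bar>V_coeff k e i\<bar> * q ^ i)"
  have M0: "M \<ge> 0" unfolding M_def by (intro sum_nonneg) (use assms in auto)
  show "\<bar>V_coeff k e i\<bar> * q ^ i \<le> M" for i
  proof (induction i rule: less_induct)
    case (less i)
    show ?case
    proof (cases "i < J")
      case True
      then show ?thesis unfolding M_def by (intro member_le_sum) (use assms in auto)
    next
      case False
      define j where "j = i - 2"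
      have "2 \<le> J" by (simp add: J_def)
      with False have ij: "i = Suc (Suc j)" and jJ: "J \<le> Suc (Suc j)"
        unfolding j_def by simp_all
      show ?thesis
      proof (cases "k \<le> Suc j")
        case True
        have "e * q ^ (k + 1) \<le> real (nat \<lceil>e * q ^ (k + 1)\<rceil>)" by linarith
        also have "\<dots> \<le> real j" using jJ unfolding J_def by (intro of_nat_mono) simp
        also have "\<dots> \<le> real (Suc (Suc j)) * real (Suc j)"
          using mult_mono[of "real j" "real (Suc (Suc j))" 1 "real (Suc j)"] by simp
        finally have "e * q ^ (k + 1) \<le> real (Suc (Suc j)) * real (Suc j)" .
        moreover have "\<bar>V_coeff k e (Suc j - k)\<bar> * q ^ (Suc j - k) \<le> M"
          using less.IH ij by simp
        ultimately have "e * q ^ (k + 1) * (\<bar>V_coeff k e (Suc j - k)\<bar> * q ^ (Suc j - k))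
            \<le> (real (Suc (Suc j)) * real (Suc j)) * M"
          by (rule mult_mono) (use assms in auto)
        then show ?thesis
          using V_coeff_Suc_Suc_weighted[OF True assms(2,1)] ij by (simp add: divide_le_eq mult_ac)
      qed (use ij M0 in simp)
    qed
  qed
qed

lemma fps_conv_radius_V_fps:
  assumes "e \<ge> 0"
  shows "fps_conv_radius (V_fps k e :: 'a::{real_normed_field,banach} fps) = \<infinity>"
  unfolding fps_conv_radius_def
proof (rule conv_radius_inftyI'[of 0])
  fix r :: real assume r: "r > 0"
  obtain M where M: "\<And>i. \<bar>V_coeff k e i\<bar> * (2 * r) ^ i \<le> M"
    using V_coeff_weighted_bounded[of "2 * r" e k] r assms by auto
  have "summable (\<lambda>n. fps_nth (V_fps k e :: 'a fps) n * of_real r ^ n)"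
  proof (rule summable_norm_cancel, rule summable_comparison_test')
    show "summable (\<lambda>n. M * (1/2) ^ n)" by simp
    fix n
    have "norm (norm (fps_nth (V_fps k e :: 'a fps) n * of_real r ^ n))
        = (\<bar>V_coeff k e n\<bar> * (2 * r) ^ n) * (1/2) ^ n"
      using r by (simp add: norm_mult norm_power power_mult_distrib field_simps)
    also have "\<dots> \<le> M * (1/2) ^ n" by (intro mult_right_mono M) auto
    finally show "norm (norm (fps_nth (V_fps k e :: 'a fps) n * of_real r ^ n)) \<le> M * (1/2) ^ n" .
  qed
  then show "\<exists>z::'a. norm z = r \<and> summable (\<lambda>n. fps_nth (V_fps k e) n * z ^ n)"
    using r by (intro exI[of _ "of_real r"]) simp
qed

lemma fps_conv_radius_deriv_V_fps:
  assumes "e \<ge> 0"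
  shows "fps_conv_radius (fps_deriv (V_fps k e) :: 'a::{real_normed_field,banach} fps) = \<infinity>"
  using fps_conv_radius_deriv[of "V_fps k e :: 'a fps"] fps_conv_radius_V_fps[OF assms, where 'a='a, of k] by simp

lemma V_coeff_tail_le:
  assumes "q \<ge> 1" "e \<ge> 0" "e * q ^ (k + 1) \<le> 2" "0 \<le> R"
  shows "real (Suc (Suc n)) * \<bar>V_coeff k e (Suc (Suc n))\<bar> * R ^ (Suc (Suc n))
           \<le> (if k \<le> n + 1 then e * q ^ (k + 2) * (R / q) ^ (Suc (Suc n)) else 0)"
proof (cases "k \<le> n + 1")
  case True
  have q: "q > 0" using assms(1) by simp
  define X where "X = e * q ^ (k + 1) * (\<bar>V_coeff k e (Suc n - k)\<bar> * q ^ (Suc n - k))"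
  have "X \<ge> 0" using assms(2) q by (simp add: X_def)
  have "\<bar>V_coeff k e (Suc (Suc n))\<bar> * q ^ (Suc (Suc n)) = X / (real (Suc (Suc n)) * real (Suc n))"
    unfolding X_def using True assms(2) q by (intro V_coeff_Suc_Suc_weighted) auto
  then have "real (Suc (Suc n)) * (\<bar>V_coeff k e (Suc (Suc n))\<bar> * q ^ (Suc (Suc n))) = X / real (Suc n)"
    by (simp del: V_coeff.simps)
  also have "\<dots> \<le> X"
    using \<open>X \<ge> 0\<close> by (simp add: divide_le_eq mult_le_cancel_left1)
  also have "\<dots> \<le> e * q ^ (k + 1) * q"
    unfolding X_def using V_coeff_weighted_le[OF assms(1-3)] assms(2) q by (intro mult_left_mono) auto
  finally have "real (Suc (Suc n)) * \<bar>V_coeff k e (Suc (Suc n))\<bar> * q ^ (Suc (Suc n)) \<le> e * q ^ (k + 2)"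
    by (simp add: mult_ac)
  then have "real (Suc (Suc n)) * \<bar>V_coeff k e (Suc (Suc n))\<bar> * q ^ (Suc (Suc n)) * (R / q) ^ (Suc (Suc n))
      \<le> e * q ^ (k + 2) * (R / q) ^ (Suc (Suc n))"
    by (rule mult_right_mono) (use assms q in simp)
  then show ?thesis
    using True q by (simp add: power_divide)
qed simp

lemma V_coeff_tail_sum:
  assumes "q \<ge> 1" "e \<ge> 0" "e * q ^ (k + 1) \<le> 2" "k \<ge> 1" "0 \<le> R" "R < q"
  defines "T \<equiv> \<lambda>n. real (Suc (Suc n)) * \<bar>V_coeff k e (Suc (Suc n))\<bar> * R ^ (Suc (Suc n))"
  shows "summable T" "suminf T \<le> e * q ^ (k + 2) * (R / q) ^ (k + 1) / (1 - R / q)"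
proof -
  define g where "g n = (if k \<le> n + 1 then e * q ^ (k + 2) * (R / q) ^ (Suc (Suc n)) else 0)" for n
  have "(\<lambda>n. (e * q ^ (k + 2) * (R / q) ^ (k + 1)) * (R / q) ^ n)
      sums (e * q ^ (k + 2) * (R / q) ^ (k + 1) * (1 / (1 - R / q)))"
    using assms by (intro sums_mult geometric_sums) auto
  moreover have "g (n + (k - 1)) = (e * q ^ (k + 2) * (R / q) ^ (k + 1)) * (R / q) ^ n" for n
    using assms(4) by (simp add: g_def mult.assoc add_ac flip: power_add)
  ultimately have "(\<lambda>n. g (n + (k - 1))) sums (e * q ^ (k + 2) * (R / q) ^ (k + 1) / (1 - R / q))"
    by simp
  then have g: "g sums (e * q ^ (k + 2) * (R / q) ^ (k + 1) / (1 - R / q))"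
    by (subst (asm) sums_zero_iff_shift) (auto simp: g_def)
  have T: "0 \<le> T n" "T n \<le> g n" for n
    using V_coeff_tail_le[OF assms(1-3,5), of n] by (simp_all add: T_def g_def assms(5))
  show "summable T"
    by (rule summable_comparison_test'[of g 0]) (use g T in \<open>auto simp: sums_iff\<close>)
  then have "suminf T \<le> suminf g"
    by (rule suminf_le[OF T(2)]) (use g in \<open>simp add: sums_iff\<close>)
  then show "suminf T \<le> e * q ^ (k + 2) * (R / q) ^ (k + 1) / (1 - R / q)"
    using g by (simp add: sums_iff)
qed

lemma V_coeff_tail_sum_small:
  assumes k: "k \<ge> 1" and e: "e \<ge> 0" "e * (4/3) ^ (k + 1) \<le> 3/6400"
  defines "T \<equiv> \<lambda>n. real (Suc (Suc n)) * \<bar>V_coeff k e (Suc (Suc n))\<bar> * (5/4) ^ (Suc (Suc n))"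
  shows "summable T" "suminf T \<le> 1/100"
proof -
  have "e * (4/3) ^ (k + 1) \<le> 2" using e by simp
  then have tail: "summable T" "suminf T \<le> e * (4/3) ^ (k + 2) * ((5/4) / (4/3)) ^ (k + 1) / (1 - (5/4) / (4/3))"
    unfolding T_def using V_coeff_tail_sum[of "4/3" e k "5/4"] e k by (simp_all del: V_coeff.simps)
  then show "summable T" by simp
  have "suminf T \<le> e * (4/3) ^ (k + 2) * (15/16) ^ (k + 1) * 16"
    using tail(2) by simp
  also have "\<dots> = 64/3 * (e * (5/4) ^ (k + 1))"
    by (simp add: power_add power_mult_distrib[symmetric])
  also have "\<dots> \<le> 64/3 * (e * (4/3) ^ (k + 1))"
    using e by (intro mult_left_mono power_mono) auto
  also have "\<dots> \<le> 1/100" using e by simp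
  finally show "suminf T \<le> 1/100" .
qed

lemma eval_V_fps_close:
  fixes z :: "'a::{real_normed_field,banach}"
  assumes "k \<ge> 1" "e \<ge> 0" "e * (4/3) ^ (k + 1) \<le> 3/6400" and z: "norm z \<le> 5/4"
  shows "norm (eval_fps (V_fps k e) z - (z - 1)) \<le> 1/100"
proof -
  note T = V_coeff_tail_sum_small[OF assms(1-3)]
  have "(\<lambda>n. fps_nth (V_fps k e) n * z ^ n) sums eval_fps (V_fps k e) z"
    by (intro sums_eval_fps) (simp add: fps_conv_radius_V_fps assms(2))
  from sums_split_initial_segment[OF this, of 2]
  have s: "(\<lambda>n. of_real (V_coeff k e (Suc (Suc n))) * z ^ Suc (Suc n)) sums (eval_fps (V_fps k e) z - (z - 1))"
    by (simp add: numeral_2_eq_2)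
  have "norm (eval_fps (V_fps k e) z - (z - 1))
      \<le> (\<Sum>n. real (Suc (Suc n)) * \<bar>V_coeff k e (Suc (Suc n))\<bar> * (5/4) ^ (Suc (Suc n)))"
    unfolding sums_unique[OF s]
  proof (rule norm_suminf_le[OF _ T(1)])
    fix n
    have "norm (of_real (V_coeff k e (Suc (Suc n))) * z ^ Suc (Suc n))
        = \<bar>V_coeff k e (Suc (Suc n))\<bar> * norm z ^ Suc (Suc n)"
      by (simp del: V_coeff.simps add: norm_mult norm_power)
    also have "\<dots> \<le> \<bar>V_coeff k e (Suc (Suc n))\<bar> * (5/4) ^ Suc (Suc n)"
      using z by (intro mult_left_mono power_mono) auto
    also have "\<dots> \<le> real (Suc (Suc n)) * \<bar>V_coeff k e (Suc (Suc n))\<bar> * (5/4) ^ Suc (Suc n)"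
      using mult_right_mono[of 1 "real (Suc (Suc n))" "\<bar>V_coeff k e (Suc (Suc n))\<bar> * (5/4) ^ Suc (Suc n)"]
      by (simp del: V_coeff.simps add: mult.assoc)
    finally show "norm (of_real (V_coeff k e (Suc (Suc n))) * z ^ Suc (Suc n))
        \<le> real (Suc (Suc n)) * \<bar>V_coeff k e (Suc (Suc n))\<bar> * (5/4) ^ Suc (Suc n)" .
  qed
  with T(2) show ?thesis by simp
qed

lemma eval_deriv_V_fps_close:
  fixes z :: "'a::{real_normed_field,banach}"
  assumes "k \<ge> 1" "e \<ge> 0" "e * (4/3) ^ (k + 1) \<le> 3/6400" and z: "norm z \<le> 5/4"
  shows "norm (eval_fps (fps_deriv (V_fps k e)) z - 1) \<le> 1/100"
proof -
  note T = V_coeff_tail_sum_small[OF assms(1-3)]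
  have "(\<lambda>n. fps_nth (fps_deriv (V_fps k e)) n * z ^ n) sums eval_fps (fps_deriv (V_fps k e)) z"
    by (intro sums_eval_fps) (simp add: fps_conv_radius_deriv_V_fps assms(2))
  from sums_split_initial_segment[OF this, of 1]
  have s: "(\<lambda>n. of_real (real (Suc (Suc n)) * V_coeff k e (Suc (Suc n))) * z ^ Suc n)
      sums (eval_fps (fps_deriv (V_fps k e)) z - 1)"
    by simp
  have "norm (eval_fps (fps_deriv (V_fps k e)) z - 1)
      \<le> (\<Sum>n. real (Suc (Suc n)) * \<bar>V_coeff k e (Suc (Suc n))\<bar> * (5/4) ^ (Suc (Suc n)))"
    unfolding sums_unique[OF s]
  proof (rule norm_suminf_le[OF _ T(1)])
    fix n
    have "norm (of_real (real (Suc (Suc n)) * V_coeff k e (Suc (Suc n))) * z ^ Suc n)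
        = real (Suc (Suc n)) * \<bar>V_coeff k e (Suc (Suc n))\<bar> * norm z ^ Suc n"
      by (simp only: norm_mult norm_of_real norm_power abs_mult abs_of_nat)
    also have "\<dots> \<le> real (Suc (Suc n)) * \<bar>V_coeff k e (Suc (Suc n))\<bar> * (5/4) ^ Suc (Suc n)"
      using z by (intro mult_left_mono order.trans[OF power_mono power_increasing]) auto
    finally show "norm (of_real (real (Suc (Suc n)) * V_coeff k e (Suc (Suc n))) * z ^ Suc n)
        \<le> real (Suc (Suc n)) * \<bar>V_coeff k e (Suc (Suc n))\<bar> * (5/4) ^ Suc (Suc n)" .
  qed
  with T(2) show ?thesis by simp
qed

section \<open>The Riccati equation for S\<close>

lemma riccati_of_linear_ode:
  fixes V P :: "'a::field_char_0 fps"
  assumes "fps_nth V 0 = -1" "fps_nth V 1 = 1" and ode: "fps_deriv (fps_deriv V) = P * V"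
  shows "fps_nth (-1 - fps_deriv V / V) 0 = 0"
    and "fps_deriv (-1 - fps_deriv V / V) = (1 + (-1 - fps_deriv V / V))\<^sup>2 - P"
proof -
  have V0: "fps_nth V 0 \<noteq> 0" using assms(1) by simp
  define I where "I = inverse V"
  have VI: "V * I = 1" unfolding I_def by (rule inverse_mult_eq_1'[OF V0])
  have S: "-1 - fps_deriv V / V = -1 - fps_deriv V * I"
    unfolding I_def using V0 by (simp add: fps_divide_unit)
  have dI: "fps_deriv I = - fps_deriv V * I\<^sup>2"
    unfolding I_def using V0 by (rule fps_inverse_deriv)
  show "fps_nth (-1 - fps_deriv V / V) 0 = 0"
    unfolding S I_def using assms(1,2) by simp
  have "fps_deriv (-1 - fps_deriv V * I) = - (P * (V * I)) + (fps_deriv V * I)\<^sup>2"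
    by (simp add: ode dI algebra_simps power2_eq_square)
  then show "fps_deriv (-1 - fps_deriv V / V) = (1 + (-1 - fps_deriv V / V))\<^sup>2 - P"
    unfolding S VI by (simp add: power2_eq_square)
qed

lemma riccati_unique:
  fixes S1 S2 P :: "'a::field_char_0 fps"
  assumes "fps_nth S1 0 = fps_nth S2 0"
    and "fps_deriv S1 = (1 + S1)\<^sup>2 - P" "fps_deriv S2 = (1 + S2)\<^sup>2 - P"
  shows "S1 = S2"
proof -
  define D where "D = S1 - S2"
  have "fps_deriv D = (1 + S1)\<^sup>2 - (1 + S2)\<^sup>2"
    using assms(2,3) by (simp add: D_def)
  then have dD: "fps_deriv D = D * (2 + S1 + S2)"
    by (simp add: D_def power2_eq_square algebra_simps)
  have "fps_nth D n = 0" for n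
  proof (induction n rule: less_induct)
    case (less n)
    show ?case
    proof (cases n)
      case (Suc m)
      have "of_nat (Suc m) * fps_nth D (Suc m) = fps_nth (D * (2 + S1 + S2)) m"
        by (simp flip: dD)
      also have "\<dots> = 0"
        using less.IH Suc by (auto simp: fps_mult_nth intro!: sum.neutral)
      finally show ?thesis
        using Suc by (simp del: of_nat_Suc)
    qed (use assms(1) D_def in simp)
  qed
  then show ?thesis
    by (simp add: D_def fps_eq_iff)
qed

definition fps_of_real :: "real fps \<Rightarrow> 'a::real_algebra_1 fps" where
  "fps_of_real F = Abs_fps (\<lambda>n. of_real (fps_nth F n))"

lemma fps_of_real_simps:
  "fps_of_real (F + G) = fps_of_real F + fps_of_real G"
  "fps_of_real (F - G) = fps_of_real F - fps_of_real G"
  "fps_of_real (F * G) = fps_of_real F * (fps_of_real G :: 'a::{real_algebra_1,comm_ring_1} fps)"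
  "fps_of_real 1 = 1"
  "fps_of_real (fps_const c) = fps_const (of_real c)"
  "fps_of_real (fps_X ^ m) = fps_X ^ m"
  "fps_of_real (fps_deriv F) = fps_deriv (fps_of_real F)"
  by (auto simp: fps_eq_iff fps_of_real_def fps_mult_nth fps_one_nth fps_X_power_nth)

lemma fps_of_real_riccati:
  assumes "fps_deriv S = (1 + S)\<^sup>2 - fps_const c * fps_X ^ m"
  shows "fps_deriv (fps_of_real S :: 'a::{real_algebra_1,comm_ring_1} fps)
           = (1 + fps_of_real S)\<^sup>2 - fps_const (of_real c) * fps_X ^ m"
proof -
  have "fps_of_real (fps_deriv S) = (fps_of_real ((1 + S)\<^sup>2 - fps_const c * fps_X ^ m) :: 'a fps)"
    by (simp only: assms)
  then show ?thesis
    by (simp only: fps_of_real_simps power2_eq_square)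
qed

lemma S_fps_eqI:
  assumes "fps_nth S 0 = 0"
    and "fps_deriv S = (1 + S)\<^sup>2 - fps_const (wt t * real (tsize t)) * fps_X ^ (tsize t - 1)"
  shows "S_fps t = S"
  unfolding S_fps_def
proof (rule the_equality)
  fix S' assume S': "fps_nth S' 0 = 0 \<and>
    fps_deriv S' = (1 + S')\<^sup>2 - fps_const (wt t * real (tsize t)) * fps_X ^ (tsize t - 1)"
  show "S' = S"
    by (rule riccati_unique[OF _ conjunct2[OF S'] assms(2)]) (simp only: conjunct1[OF S'] assms(1))
qed (use assms in simp)

lemma S_fps_eq_V_fps:
  assumes "tsize t \<ge> 1"
  defines "k \<equiv> tsize t" and "e \<equiv> wt t * real (tsize t)"
  shows "fps_of_real (S_fps t) = (-1 - fps_deriv (V_fps k e) / V_fps k e :: complex fps)"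
proof -
  have ode_real: "fps_deriv (fps_deriv (V_fps k e :: real fps)) = (fps_const e * fps_X ^ (k - 1)) * V_fps k e"
    using V_fps_ode[where 'a=real, of k e] assms(1) by (simp add: k_def)
  have ode_complex: "fps_deriv (fps_deriv (V_fps k e :: complex fps))
      = (fps_const (of_real e) * fps_X ^ (k - 1)) * V_fps k e"
    using V_fps_ode[of k e] assms(1) by (simp add: k_def)
  define Sr :: "real fps" where "Sr = -1 - fps_deriv (V_fps k e) / V_fps k e"
  have Sr: "fps_nth Sr 0 = 0" "fps_deriv Sr = (1 + Sr)\<^sup>2 - fps_const e * fps_X ^ (k - 1)"
    using riccati_of_linear_ode[OF _ _ ode_real] by (simp_all add: Sr_def)
  have "S_fps t = Sr"
    using Sr by (intro S_fps_eqI) (simp_all add: k_def e_def)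
  moreover have "fps_of_real Sr = (-1 - fps_deriv (V_fps k e) / V_fps k e :: complex fps)"
  proof (rule riccati_unique[OF _ fps_of_real_riccati[OF Sr(2)]])
    show "fps_deriv (-1 - fps_deriv (V_fps k e) / V_fps k e :: complex fps)
        = (1 + (-1 - fps_deriv (V_fps k e) / V_fps k e))\<^sup>2 - fps_const (of_real e) * fps_X ^ (k - 1)"
      by (rule riccati_of_linear_ode(2)[OF _ _ ode_complex]) simp_all
    have "fps_nth (-1 - fps_deriv (V_fps k e) / V_fps k e :: complex fps) 0 = 0"
      by (rule riccati_of_linear_ode(1)[OF _ _ ode_complex]) simp_all
    then show "fps_nth (fps_of_real Sr) 0 = fps_nth (-1 - fps_deriv (V_fps k e) / V_fps k e :: complex fps) 0"
      using Sr(1) by (simp add: fps_of_real_def)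
  qed
  ultimately show ?thesis by simp
qed

section \<open>The first zero of u\<close>

lemma nonneg_zero_if_abs_deriv_le:
  fixes E E' :: "real \<Rightarrow> real"
  assumes deriv: "\<And>x. (E has_real_derivative E' x) (at x)"
    and bound: "\<And>x. \<bar>x\<bar> \<le> X \<Longrightarrow> \<bar>E' x\<bar> \<le> L * E x"
    and "\<And>x. E x \<ge> 0" "E 0 = 0" "\<bar>x0\<bar> \<le> X"
  shows "E x0 = 0"
proof (cases "x0 \<ge> 0")
  case True
  have "E x0 * exp (- L * x0) \<le> E 0 * exp (- L * 0)"
  proof (rule DERIV_nonpos_imp_nonincreasing[of 0 x0 "\<lambda>x. E x * exp (- L * x)", OF True])
    fix x assume x: "0 \<le> x" "x \<le> x0"
    have "((\<lambda>x. E x * exp (- L * x)) has_real_derivative (E' x - L * E x) * exp (- L * x)) (at x)"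
      by (auto intro!: derivative_eq_intros deriv simp: algebra_simps)
    moreover have "(E' x - L * E x) * exp (- L * x) \<le> 0"
      using bound[of x] x assms(5) by (simp add: mult_nonpos_nonneg)
    ultimately show "\<exists>y. ((\<lambda>x. E x * exp (- L * x)) has_real_derivative y) (at x) \<and> y \<le> 0" by blast
  qed
  then show ?thesis using assms(3)[of x0] assms(4) by (simp add: mult_le_0_iff antisym)
next
  case False
  have "E x0 * exp (L * x0) \<le> E 0 * exp (L * 0)"
  proof (rule DERIV_nonneg_imp_nondecreasing[of x0 0 "\<lambda>x. E x * exp (L * x)"])
    show "x0 \<le> 0" using False by simp
    fix x assume x: "x0 \<le> x" "x \<le> 0"
    have "((\<lambda>x. E x * exp (L * x)) has_real_derivative (E' x + L * E x) * exp (L * x)) (at x)"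
      by (auto intro!: derivative_eq_intros deriv simp: algebra_simps)
    moreover have "(E' x + L * E x) * exp (L * x) \<ge> 0"
      using bound[of x] x assms(5) False by simp
    ultimately show "\<exists>y. ((\<lambda>x. E x * exp (L * x)) has_real_derivative y) (at x) \<and> y \<ge> 0" by blast
  qed
  then show ?thesis using assms(3)[of x0] assms(4) by (simp add: mult_le_0_iff antisym)
qed

lemma abs_energy_deriv_le:
  fixes d w p P :: real
  assumes "\<bar>p\<bar> \<le> P"
  shows "\<bar>2 * d * w + 2 * w * (2 * w - p * d)\<bar> \<le> (5 + P) * (d\<^sup>2 + w\<^sup>2)"
proof -
  have dw: "\<bar>2 * d * w\<bar> \<le> d\<^sup>2 + w\<^sup>2"
    using sum_squares_bound[of "\<bar>d\<bar>" "\<bar>w\<bar>"] by (simp add: abs_mult)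
  have "\<bar>p * (2 * d * w)\<bar> \<le> P * (d\<^sup>2 + w\<^sup>2)"
    unfolding abs_mult[of p] by (rule mult_mono[OF assms dw]) (use assms in auto)
  have "\<bar>2 * w * (2 * w - p * d)\<bar> = \<bar>4 * w\<^sup>2 - p * (2 * d * w)\<bar>"
    by (simp add: power2_eq_square algebra_simps)
  also have "\<dots> \<le> 4 * w\<^sup>2 + \<bar>p * (2 * d * w)\<bar>"
    using abs_triangle_ineq4[of "4 * w\<^sup>2" "p * (2 * d * w)"] by simp
  finally have "\<bar>2 * w * (2 * w - p * d)\<bar> \<le> 4 * w\<^sup>2 + P * (d\<^sup>2 + w\<^sup>2)"
    using \<open>\<bar>p * (2 * d * w)\<bar> \<le> P * (d\<^sup>2 + w\<^sup>2)\<close> by linarith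
  then have "\<bar>2 * d * w + 2 * w * (2 * w - p * d)\<bar> \<le> (d\<^sup>2 + w\<^sup>2) + 4 * w\<^sup>2 + P * (d\<^sup>2 + w\<^sup>2)"
    using dw abs_triangle_ineq[of "2 * d * w" "2 * w * (2 * w - p * d)"] by linarith
  also have "\<dots> \<le> (5 + P) * (d\<^sup>2 + w\<^sup>2)"
    using zero_le_power2[of d] by (simp add: algebra_simps)
  finally show ?thesis .
qed

lemma linear_ode2_unique:
  fixes p u1 u2 w1 w2 :: "real \<Rightarrow> real"
  assumes p: "continuous_on UNIV p"
    and u1: "\<And>x. (u1 has_real_derivative w1 x) (at x)"
    and w1: "\<And>x. (w1 has_real_derivative (2 * w1 x - p x * u1 x)) (at x)"
    and u2: "\<And>x. (u2 has_real_derivative w2 x) (at x)"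
    and w2: "\<And>x. (w2 has_real_derivative (2 * w2 x - p x * u2 x)) (at x)"
    and "u1 0 = u2 0" "w1 0 = w2 0"
  shows "u1 = u2"
proof
  fix x0 :: real
  define d where "d x = u1 x - u2 x" for x
  define w where "w x = w1 x - w2 x" for x
  have "bounded (p ` cball 0 \<bar>x0\<bar>)"
    by (intro compact_imp_bounded compact_continuous_image continuous_on_subset[OF p]) auto
  then obtain P where "\<forall>y \<in> p ` cball 0 \<bar>x0\<bar>. norm y \<le> P"
    by (auto simp: bounded_iff)
  then have P: "\<And>x. \<bar>x\<bar> \<le> \<bar>x0\<bar> \<Longrightarrow> \<bar>p x\<bar> \<le> P"
    by auto
  have "((\<lambda>x. (d x)\<^sup>2 + (w x)\<^sup>2) has_real_derivative
      2 * d x * w x + 2 * w x * (2 * w x - p x * d x)) (at x)" for x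
    unfolding d_def w_def
    by (auto intro!: derivative_eq_intros u1 u2 w1 w2 simp: algebra_simps)
  then have "(d x0)\<^sup>2 + (w x0)\<^sup>2 = 0"
  proof (rule nonneg_zero_if_abs_deriv_le[where L = "5 + P" and X = "\<bar>x0\<bar>"])
    show "\<bar>2 * d x * w x + 2 * w x * (2 * w x - p x * d x)\<bar> \<le> (5 + P) * ((d x)\<^sup>2 + (w x)\<^sup>2)"
      if "\<bar>x\<bar> \<le> \<bar>x0\<bar>" for x
      by (rule abs_energy_deriv_le[OF P[OF that]])
  qed (simp_all add: d_def w_def assms(6,7))
  then show "u1 x0 = u2 x0"
    by (simp add: d_def add_nonneg_eq_0_iff)
qed

lemma the_least_positive_zero:
  fixes f :: "real \<Rightarrow> 'a::zero"
  assumes "0 < r" "f r = 0" "\<And>x. 0 < x \<Longrightarrow> x < r \<Longrightarrow> f x \<noteq> 0"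
  shows "(THE r. 0 < r \<and> f r = 0 \<and> (\<forall>x. 0 < x \<and> x < r \<longrightarrow> f x \<noteq> 0)) = r"
proof (rule the_equality)
  fix r' assume r': "0 < r' \<and> f r' = 0 \<and> (\<forall>x. 0 < x \<and> x < r' \<longrightarrow> f x \<noteq> 0)"
  show "r' = r"
  proof (rule linorder_cases[of r' r])
    assume "r' < r" then show ?thesis using r' assms(3) by blast
  next
    assume "r < r'" then show ?thesis using r' assms(1,2) by blast
  qed
qed (use assms in auto)

lemma has_real_derivative_eval_V_fps:
  assumes "e \<ge> 0"
  shows "(eval_fps (V_fps k e) has_real_derivative eval_fps (fps_deriv (V_fps k e)) x) (at x)"
    and "(eval_fps (fps_deriv (V_fps k e)) has_real_derivative
           eval_fps (fps_deriv (fps_deriv (V_fps k e))) x) (at x)"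
  using assms
  by (auto intro!: has_field_derivative_eval_fps simp: fps_conv_radius_V_fps fps_conv_radius_deriv_V_fps)

lemma eval_V_fps_ode:
  assumes "k \<ge> 1" "e \<ge> 0"
  shows "eval_fps (fps_deriv (fps_deriv (V_fps k e))) x = e * x ^ (k - 1) * eval_fps (V_fps k e) (x::real)"
proof -
  have "fps_deriv (fps_deriv (V_fps k e :: real fps)) = fps_const e * (fps_X ^ (k - 1) * V_fps k e)"
    using V_fps_ode[where 'a=real, of k e] assms(1) by (simp add: mult.assoc)
  moreover have r: "fps_conv_radius (V_fps k e :: real fps) = \<infinity>"
    by (rule fps_conv_radius_V_fps[OF assms(2)])
  moreover have "fps_conv_radius (fps_X ^ (k - 1) * V_fps k e :: real fps) = \<infinity>"
    using fps_conv_radius_mult[of "fps_X ^ (k - 1)" "V_fps k e :: real fps"] r by simp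
  ultimately show ?thesis
    by (simp add: eval_fps_mult)
qed

lemma u_sol_eq:
  assumes "tsize t \<ge> 1"
  defines "k \<equiv> tsize t" and "e \<equiv> wt t * real (tsize t)"
  shows "u_sol t = (\<lambda>x. exp x * eval_fps (V_fps k e) x)"
proof -
  have e: "e \<ge> 0" by (simp add: e_def wt_nonneg)
  define v where "v = eval_fps (V_fps k e :: real fps)"
  define v' where "v' = eval_fps (fps_deriv (V_fps k e) :: real fps)"
  note dv = has_real_derivative_eval_V_fps[OF e, of k, folded v_def v'_def]
  have k: "k \<ge> 1" using assms(1) by (simp add: k_def)
  have dv': "(v' has_real_derivative e * x ^ (k - 1) * v x) (at x)" for x
    using dv(2)[of x] by (simp add: eval_V_fps_ode[OF k e] v_def)
  define u where "u x = exp x * v x" for x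
  define w where "w x = exp x * (v x + v' x)" for x
  have du: "(u has_real_derivative w x) (at x)" for x
    unfolding u_def[abs_def] w_def by (auto intro!: derivative_eq_intros dv simp: algebra_simps)
  have dw: "(w has_real_derivative (2 * w x - (1 - e * x ^ (k - 1)) * u x)) (at x)" for x
    unfolding w_def[abs_def] u_def by (auto intro!: derivative_eq_intros dv dv' simp: algebra_simps)
  have "u_sol t = u"
    unfolding u_sol_def
  proof (rule the_equality)
    show "u 0 = -1 \<and> (\<exists>u'. u' 0 = 0 \<and> (\<forall>x. (u has_real_derivative u' x) (at x) \<and>
      (u' has_real_derivative 2 * u' x - (1 - wt t * real (tsize t) * x ^ (tsize t - 1)) * u x) (at x)))"
      using du dw by (intro conjI exI[of _ w]) (auto simp: u_def w_def v_def v'_def k_def e_def eval_fps_at_0)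
  next
    fix u2 assume "u2 0 = -1 \<and> (\<exists>u'. u' 0 = 0 \<and> (\<forall>x. (u2 has_real_derivative u' x) (at x) \<and>
      (u' has_real_derivative 2 * u' x - (1 - wt t * real (tsize t) * x ^ (tsize t - 1)) * u2 x) (at x)))"
    then obtain w2 where u2: "u2 0 = -1" "\<And>x. (u2 has_real_derivative w2 x) (at x)"
      and w2: "w2 0 = 0" "\<And>x. (w2 has_real_derivative 2 * w2 x - (1 - e * x ^ (k - 1)) * u2 x) (at x)"
      unfolding e_def k_def by blast
    show "u2 = u"
    proof (rule linear_ode2_unique[OF _ u2(2) w2(2) du dw])
      show "continuous_on UNIV (\<lambda>x::real. 1 - e * x ^ (k - 1))"
        by (intro continuous_intros)
    qed (use u2 w2 in \<open>simp_all add: u_def w_def v_def v'_def eval_fps_at_0\<close>)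
  qed
  then show ?thesis by (simp add: u_def[abs_def] v_def)
qed

lemma first_positive_zero_near_one:
  fixes v v' :: "real \<Rightarrow> real"
  assumes deriv: "\<And>x. (v has_real_derivative v' x) (at x)"
    and close: "\<And>x. \<bar>x\<bar> \<le> 5/4 \<Longrightarrow> \<bar>v x - (x - 1)\<bar> \<le> 1/100"
    and close': "\<And>x. \<bar>x\<bar> \<le> 5/4 \<Longrightarrow> \<bar>v' x - 1\<bar> \<le> 1/100"
  obtains r where "49/50 \<le> r" "r \<le> 51/50" "v r = 0" "\<And>x. 0 < x \<Longrightarrow> x < r \<Longrightarrow> v x \<noteq> 0"
proof -
  have mono: "v a < v b" if "a < b" "\<bar>a\<bar> \<le> 5/4" "\<bar>b\<bar> \<le> 5/4" for a b
  proof (rule DERIV_pos_imp_increasing[OF that(1)])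
    fix x assume "a \<le> x" "x \<le> b"
    then have "\<bar>x\<bar> \<le> 5/4" using that by linarith
    then have "v' x > 0" using close'[of x] by linarith
    then show "\<exists>y. (v has_real_derivative y) (at x) \<and> 0 < y" using deriv by blast
  qed
  have "\<bar>v (49/50) - (49/50 - 1)\<bar> \<le> 1/100" "\<bar>v (51/50) - (51/50 - 1)\<bar> \<le> 1/100"
    by (simp_all only: close)
  then have "v (49/50) \<le> 0" "0 \<le> v (51/50)"
    unfolding abs_le_iff by linarith+
  moreover have "isCont v x" for x
    using deriv DERIV_isCont by blast
  ultimately obtain r where r: "49/50 \<le> r" "r \<le> 51/50" "v r = 0"
    using IVT[of v "49/50" 0 "51/50"] by auto
  moreover have "v x \<noteq> 0" if "0 < x" "x < r" for x
    using mono[of x r] that r by auto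
  ultimately show ?thesis using that by blast
qed

lemma rho_eq:
  assumes "tsize t \<ge> 1" and small: "wt t * real (tsize t) * (4/3) ^ (tsize t + 1) \<le> 3/6400"
  defines "k \<equiv> tsize t" and "e \<equiv> wt t * real (tsize t)"
  shows "49/50 \<le> rho t" "rho t \<le> 51/50" "eval_fps (V_fps k e :: real fps) (rho t) = 0"
proof -
  have e: "e \<ge> 0" by (simp add: e_def wt_nonneg)
  note close = eval_V_fps_close[where 'a=real, of k e, folded k_def e_def, OF _ e]
    eval_deriv_V_fps_close[where 'a=real, of k e, folded k_def e_def, OF _ e]
  obtain r where r: "49/50 \<le> r" "r \<le> 51/50" "eval_fps (V_fps k e :: real fps) r = 0"
    "\<And>x. 0 < x \<Longrightarrow> x < r \<Longrightarrow> eval_fps (V_fps k e :: real fps) x \<noteq> 0"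
    by (rule first_positive_zero_near_one[OF has_real_derivative_eval_V_fps(1)[OF e]])
       (use close assms(1) small in \<open>auto simp: k_def e_def\<close>)
  have "rho t = r"
    unfolding rho_def u_sol_eq[OF assms(1), folded k_def e_def]
    by (rule the_least_positive_zero) (use r in auto)
  then show "49/50 \<le> rho t" "rho t \<le> 51/50" "eval_fps (V_fps k e :: real fps) (rho t) = 0"
    using r by simp_all
qed

section \<open>Coefficients of a logarithmic derivative\<close>

lemma eq_if_zeros_of_near_identity:
  fixes f f' :: "'a::real_normed_field \<Rightarrow> 'a"
  assumes "convex S" and deriv: "\<And>z. z \<in> S \<Longrightarrow> (f has_field_derivative f' z) (at z)"
    and close: "\<And>z. z \<in> S \<Longrightarrow> norm (f' z - 1) \<le> B" and "B < 1"
    and "z \<in> S" "c \<in> S" "f z = 0" "f c = 0"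
  shows "z = c"
proof -
  have "norm ((\<lambda>z. f z - z) z - (\<lambda>z. f z - z) c) \<le> B * norm (z - c)"
  proof (rule field_differentiable_bound[OF \<open>convex S\<close>])
    fix w assume w: "w \<in> S"
    show "((\<lambda>z. f z - z) has_field_derivative f' w - 1) (at w within S)"
      by (rule has_field_derivative_at_within, rule DERIV_diff[OF deriv[OF w] DERIV_ident])
    show "norm (f' w - 1) \<le> B" by (rule close[OF w])
  qed fact+
  then have "norm (z - c) \<le> B * norm (z - c)"
    using assms(7,8) by (simp add: norm_minus_commute)
  then have "(1 - B) * norm (z - c) \<le> 0"
    by (simp add: algebra_simps)
  with \<open>B < 1\<close> show ?thesis
    by (simp add: mult_le_0_iff)
qed

lemma log_deriv_remove_simple_zero:
  fixes V V' :: "complex \<Rightarrow> complex"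
  assumes deriv: "\<And>z. (V has_field_derivative V' z) (at z)"
    and "V c = 0" "V' c \<noteq> 0" "open S" and nonzero: "\<And>z. z \<in> S \<Longrightarrow> z \<noteq> c \<Longrightarrow> V z \<noteq> 0"
  obtains h where "h holomorphic_on S" "\<And>z. z \<in> S \<Longrightarrow> z \<noteq> c \<Longrightarrow> - (V' z / V z) = inverse (c - z) + h z"
proof
  have holV: "V holomorphic_on UNIV"
    using deriv by (auto simp: holomorphic_on_def field_differentiable_def)
  define g where "g z = (if z = c then deriv V c else (V z - V c) / (z - c))" for z
  have holg: "g holomorphic_on UNIV"
    unfolding g_def[abs_def] by (rule pole_lemma_open[OF holV]) simp
  have gV: "g z * (z - c) = V z" for z
    using \<open>V c = 0\<close> by (simp add: g_def)
  have dg: "(g has_field_derivative deriv g z) (at z)" for z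
    using holg by (intro holomorphic_derivI[of _ UNIV]) auto
  have g'V: "deriv g z * (z - c) + g z = V' z" for z
  proof -
    have "((\<lambda>z. g z * (z - c)) has_field_derivative deriv g z * (z - c) + g z) (at z)"
      by (auto intro!: derivative_eq_intros dg)
    then show ?thesis
      using DERIV_unique[OF _ deriv[of z]] gV by simp
  qed
  have g_nonzero: "g z \<noteq> 0" if "z \<in> S" for z
  proof (cases "z = c")
    case True
    then show ?thesis using g'V[of c] \<open>V' c \<noteq> 0\<close> by simp
  next
    case False
    then show ?thesis using nonzero[OF that False] gV[of z] by auto
  qed
  define h where "h z = - (deriv g z / g z)" for z
  show "h holomorphic_on S"
    unfolding h_def[abs_def] using holg \<open>open S\<close> g_nonzero
    by (intro holomorphic_intros holomorphic_deriv[of g UNIV, THEN holomorphic_on_subset])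
       (auto intro: holomorphic_on_subset)
  fix z assume z: "z \<in> S" "z \<noteq> c"
  then have "g z \<noteq> 0" "z - c \<noteq> 0" using g_nonzero by auto
  then have "V' z / V z = deriv g z / g z + 1 / (z - c)"
    unfolding g'V[of z, symmetric] gV[of z, symmetric] by (simp add: field_simps)
  moreover have "inverse (c - z) = - (1 / (z - c))"
    by (simp add: inverse_eq_divide minus_divide_right)
  ultimately show "- (V' z / V z) = inverse (c - z) + h z"
    by (simp add: h_def)
qed

lemma inverse_fps_const_minus_X:
  assumes "(c::'a::field) \<noteq> 0"
  shows "inverse (fps_const c - fps_X) = Abs_fps (\<lambda>n. 1 / c ^ (n + 1))"
proof (rule fps_inverse_unique, rule fps_ext)
  fix n
  show "fps_nth ((fps_const c - fps_X) * Abs_fps (\<lambda>n. 1 / c ^ (n + 1))) n = fps_nth 1 n"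
    using assms by (cases n) (simp_all add: algebra_simps fps_X_mult_nth)
qed

lemma fps_nth_simple_pole_plus_holomorphic:
  fixes h :: "complex \<Rightarrow> complex"
  assumes F: "(\<lambda>z. inverse (c - z) + h z) has_fps_expansion F" and "c \<noteq> 0"
    and holh: "h holomorphic_on ball 0 R" and "0 < r" "r < R"
    and bound: "\<And>z. norm z = r \<Longrightarrow> norm (h z) \<le> B"
  shows "norm (fps_nth F n - 1 / c ^ (n + 1)) \<le> B / r ^ n"
proof -
  have "h analytic_on {0}"
    using holh \<open>0 < r\<close> \<open>r < R\<close> by (auto simp: analytic_on_open[symmetric] intro: analytic_on_subset)
  then have H: "h has_fps_expansion fps_expansion h 0"
    by (rule analytic_at_imp_has_fps_expansion_0)
  have G: "(\<lambda>z. inverse (c - z) + h z) has_fps_expansion inverse (fps_const c - fps_X) + fps_expansion h 0"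
    using \<open>c \<noteq> 0\<close> by (intro has_fps_expansion_add H has_fps_expansion_inverse
        has_fps_expansion_diff has_fps_expansion_const has_fps_expansion_fps_X) simp_all
  have "F = inverse (fps_const c - fps_X) + fps_expansion h 0"
    by (rule fps_ext) (simp only: fps_nth_fps_expansion[OF F] fps_nth_fps_expansion[OF G])
  then have "norm (fps_nth F n - 1 / c ^ (n + 1)) = norm ((deriv ^^ n) h 0) / fact n"
    by (simp add: inverse_fps_const_minus_X[OF \<open>c \<noteq> 0\<close>] fps_nth_fps_expansion[OF H] norm_divide)
  also have "\<dots> \<le> (fact n * B / r ^ n) / fact n"
  proof (rule divide_right_mono[OF Cauchy_inequality])
    show "h holomorphic_on ball 0 r"
      by (rule holomorphic_on_subset[OF holh]) (use \<open>r < R\<close> in auto)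
    show "continuous_on (cball 0 r) h"
      by (rule continuous_on_subset[OF holomorphic_on_imp_continuous_on[OF holh]])
         (use \<open>r < R\<close> in auto)
  qed (use \<open>0 < r\<close> bound in auto)
  also have "\<dots> = B / r ^ n" by simp
  finally show ?thesis .
qed

lemma norm_log_deriv_minus_pole_le:
  fixes v v' z c :: complex
  assumes v: "norm (v - (z - 1)) \<le> 1/100" and v': "norm (v' - 1) \<le> 1/100"
    and z: "norm z = 23/20" and c: "norm c \<le> 51/50"
  shows "norm (- (v' / v) - inverse (c - z)) \<le> 15"
proof -
  have "norm (z - 1) \<ge> 3/20"
    using norm_triangle_ineq2[of z 1] z by simp
  then have "norm v \<ge> 7/50"
    using v norm_triangle_ineq4[of v "v - (z - 1)"] by simp
  moreover have "norm v' \<le> 101/100"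
    using v' norm_triangle_ineq[of "v' - 1" 1] by simp
  ultimately have "norm (v' / v) \<le> (101/100) / (7/50)"
    unfolding norm_divide by (intro frac_le) auto
  moreover have "norm (c - z) \<ge> 13/100"
    using norm_triangle_ineq2[of z c] z c by (simp add: norm_minus_commute)
  then have "norm (inverse (c - z)) \<le> inverse (13/100)"
    unfolding norm_inverse by (rule le_imp_inverse_le) simp
  ultimately show ?thesis
    using norm_triangle_ineq4[of "- (v' / v)" "inverse (c - z)"] by simp
qed

lemma fps_nth_log_deriv_near_z_minus_1:
  fixes F :: "complex fps" and c :: complex
  assumes F: "fps_conv_radius F = \<infinity>"
    and close: "\<And>z. norm z \<le> 5/4 \<Longrightarrow> norm (eval_fps F z - (z - 1)) \<le> 1/100"
    and close': "\<And>z. norm z \<le> 5/4 \<Longrightarrow> norm (eval_fps (fps_deriv F) z - 1) \<le> 1/100"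
    and zero: "eval_fps F c = 0" and c: "49/50 \<le> norm c" "norm c \<le> 51/50"
  shows "norm (fps_nth (- (fps_deriv F / F)) n - 1 / c ^ (n + 1)) \<le> 15 / (23/20) ^ n"
proof -
  define V where "V = eval_fps F"
  define V' where "V' = eval_fps (fps_deriv F)"
  have F': "fps_conv_radius (fps_deriv F) = \<infinity>"
    using fps_conv_radius_deriv[of F] F by simp
  have dV: "(V has_field_derivative V' z) (at z)" for z
    unfolding V_def V'_def by (rule has_field_derivative_eval_fps) (simp add: F)
  have "norm (V' c - 1) \<le> 1/100"
    using close' c unfolding V'_def by simp
  then have V'c: "V' c \<noteq> 0" by (cases "V' c = 0") simp_all
  have nonzero: "V z \<noteq> 0" if "z \<in> ball 0 (5/4)" "z \<noteq> c" for z
  proof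
    assume "V z = 0"
    have "V c = 0" using zero by (simp add: V_def)
    have "z = c"
    proof (rule eq_if_zeros_of_near_identity[OF convex_cball dV _ _ _ _ \<open>V z = 0\<close> \<open>V c = 0\<close>])
      show "norm (V' w - 1) \<le> 1/100" if "w \<in> cball 0 (5/4)" for w
        using close' that by (simp add: V'_def)
    qed (use that c in auto)
    with \<open>z \<noteq> c\<close> show False ..
  qed
  obtain h where h: "h holomorphic_on ball 0 (5/4)"
    "\<And>z. z \<in> ball 0 (5/4) \<Longrightarrow> z \<noteq> c \<Longrightarrow> - (V' z / V z) = inverse (c - z) + h z"
    using log_deriv_remove_simple_zero[OF dV _ V'c open_ball nonzero] zero
    unfolding V_def by blast
  have h_bound: "norm (h z) \<le> 15" if z: "norm z = 23/20" for z
  proof -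
    have "z \<in> ball 0 (5/4)" "z \<noteq> c" using z c by auto
    then have "h z = - (V' z / V z) - inverse (c - z)"
      using h(2)[of z] by simp
    also have "norm \<dots> \<le> 15"
      using close[of z] close'[of z] z c unfolding V_def V'_def
      by (intro norm_log_deriv_minus_pole_le) auto
    finally show ?thesis .
  qed
  have "norm (fps_nth F 0 + 1) \<le> 1/100"
    using close[of 0] F by (simp add: eval_fps_at_0)
  then have "fps_nth F 0 \<noteq> 0" by (cases "fps_nth F 0 = 0") simp_all
  then have "(\<lambda>z. - (V' z / V z)) has_fps_expansion - (fps_deriv F / F)"
    unfolding V_def V'_def
    by (intro has_fps_expansion_minus has_fps_expansion_divide' eval_fps_has_fps_expansion)
       (simp_all add: F F')
  moreover have "eventually (\<lambda>z. - (V' z / V z) = inverse (c - z) + h z) (nhds 0)"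
  proof (rule eventually_mono[OF eventually_nhds_in_open[of "ball 0 (49/50)"]])
    fix z :: complex assume "z \<in> ball 0 (49/50)"
    then show "- (V' z / V z) = inverse (c - z) + h z"
      using c by (intro h(2)) auto
  qed auto
  ultimately have "(\<lambda>z. inverse (c - z) + h z) has_fps_expansion - (fps_deriv F / F)"
    by (subst (asm) has_fps_expansion_cong[OF _ refl]) simp_all
  then show ?thesis
    using c h_bound by (intro fps_nth_simple_pole_plus_holomorphic[OF _ _ h(1)]) auto
qed

section \<open>Large trees\<close>

lemma eval_V_fps_of_real:
  assumes "e \<ge> 0"
  shows "eval_fps (V_fps k e :: 'a::{real_normed_field,banach} fps) (of_real x)
           = of_real (eval_fps (V_fps k e :: real fps) x)"
proof -
  have "summable (\<lambda>n. fps_nth (V_fps k e :: real fps) n * x ^ n)"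
    by (rule summable_fps) (simp add: fps_conv_radius_V_fps[OF assms])
  then show ?thesis
    by (simp add: eval_fps_def suminf_of_real)
qed

lemma S_fps_coeff_close:
  assumes "tsize t \<ge> 1" and small: "wt t * real (tsize t) * (4/3) ^ (tsize t + 1) \<le> 3/6400"
    and "n \<ge> 1"
  shows "\<bar>fps_nth (S_fps t) n - 1 / rho t ^ (n + 1)\<bar> \<le> 15 / (23/20) ^ n"
proof -
  define k where "k = tsize t"
  define e where "e = wt t * real (tsize t)"
  have e: "e \<ge> 0" by (simp add: e_def wt_nonneg)
  define F :: "complex fps" where "F = V_fps k e"
  note close = eval_V_fps_close[where 'a=complex, of k e, OF _ e]
    eval_deriv_V_fps_close[where 'a=complex, of k e, OF _ e]
  have "norm (fps_nth (- (fps_deriv F / F)) n - 1 / complex_of_real (rho t) ^ (n + 1)) \<le> 15 / (23/20) ^ n"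
    unfolding F_def
  proof (rule fps_nth_log_deriv_near_z_minus_1)
    show "fps_conv_radius (V_fps k e :: complex fps) = \<infinity>" by (rule fps_conv_radius_V_fps[OF e])
    have "eval_fps (V_fps k e :: real fps) (rho t) = 0"
      using rho_eq(3)[OF assms(1,2)] by (simp add: k_def e_def)
    then show "eval_fps (V_fps k e) (complex_of_real (rho t)) = 0"
      by (simp add: eval_V_fps_of_real[OF e])
    show "49/50 \<le> norm (complex_of_real (rho t))" "norm (complex_of_real (rho t)) \<le> 51/50"
      using rho_eq(1,2)[OF assms(1,2)] by simp_all
  qed (use close assms(1) small in \<open>simp_all add: k_def e_def\<close>)
  moreover have "fps_nth (fps_of_real (S_fps t) :: complex fps) n = fps_nth (-1 - fps_deriv F / F) n"
    unfolding F_def k_def e_def S_fps_eq_V_fps[OF assms(1)] ..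
  then have "fps_nth (- (fps_deriv F / F)) n = of_real (fps_nth (S_fps t) n)"
    using \<open>n \<ge> 1\<close> by (simp add: fps_of_real_def)
  ultimately have "norm (complex_of_real (fps_nth (S_fps t) n - 1 / rho t ^ (n + 1))) \<le> 15 / (23/20) ^ n"
    by simp
  then show ?thesis
    by (simp only: norm_of_real)
qed

lemma power_inverse_rho_ge:
  assumes "tsize t \<ge> 1" "wt t * real (tsize t) * (4/3) ^ (tsize t + 1) \<le> 3/6400"
  shows "(50/51) ^ m \<le> inverse (rho t ^ m)"
  unfolding power_inverse[symmetric] using rho_eq(1,2)[OF assms]
  by (intro power_mono) (auto simp: field_simps)

lemma T_fps_nth: "n \<ge> 1 \<Longrightarrow> fps_nth T_fps n = 1"
  by (simp add: T_fps_def fps_divide_unit fps_inverse_one_minus_fps_X fps_X_mult_nth)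

lemma large_trees_small_weight:
  "\<exists>D>0. \<forall>t. D \<le> tsize t \<longrightarrow> wt t * real (tsize t) * (4/3) ^ (tsize t + 1) \<le> 3/6400"
proof -
  have "(\<lambda>k::nat. real k * (8/9) ^ k) \<longlonglongrightarrow> 0" by real_asymp
  then have "\<forall>\<^sub>F k in sequentially. real k * (8/9::real) ^ k < 3/12800"
    by (rule order_tendstoD) simp
  then obtain D where D: "\<And>k. k \<ge> D \<Longrightarrow> real k * (8/9::real) ^ k < 3/12800"
    unfolding eventually_sequentially by blast
  have "wt t * real (tsize t) * (4/3) ^ (tsize t + 1) \<le> 3/6400" if "Suc D \<le> tsize t" for t
  proof -
    have "wt t * real (tsize t) * (4/3) ^ (tsize t + 1) \<le> 3/2 * (2/3) ^ tsize t * real (tsize t) * (4/3) ^ (tsize t + 1)"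
      using wt_le[of t] by (intro mult_right_mono) auto
    also have "\<dots> = 2 * (real (tsize t) * (8/9) ^ tsize t)"
      by (simp add: power_mult_distrib[symmetric])
    also have "\<dots> \<le> 3/6400" using D[of "tsize t"] that by simp
    finally show ?thesis .
  qed
  then show ?thesis by (intro exI[of _ "Suc D"]) auto
qed

lemma geometric_le_log_over_powr:
  fixes \<eta> :: real
  assumes "\<eta> > 0"
  obtains N where "\<And>n. n \<ge> N \<Longrightarrow>
    15 / (23/20) ^ n \<le> 16 * (50/51) ^ (n + 1) * (ln (real n) / real n powr (1 - \<eta>))"
proof -
  have "(\<lambda>n::nat. real n * (102/115) ^ n) \<longlonglongrightarrow> 0" by real_asymp
  then have "\<forall>\<^sub>F n in sequentially. real n * (102/115::real) ^ n < 1"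
    by (rule order_tendstoD) simp
  then obtain N where N: "\<And>n. n \<ge> N \<Longrightarrow> real n * (102/115::real) ^ n < 1"
    unfolding eventually_sequentially by blast
  show ?thesis
  proof (rule that[of "max 3 N"])
    fix n assume n: "n \<ge> max 3 N"
    have "15 / (23/20::real) ^ n = 15 * (20/23) ^ n"
      by (simp add: power_divide)
    also have "(20/23::real) ^ n = (102/115) ^ n * (50/51) ^ n"
      by (simp flip: power_mult_distrib)
    also have "15 * ((102/115) ^ n * (50/51::real) ^ n) = 15 * (51/50) * (102/115) ^ n * (50/51) ^ (n + 1)"
      by simp
    also have "\<dots> \<le> 16 * (1 / real n) * (50/51) ^ (n + 1)"
    proof (rule mult_right_mono)
      have "(102/115::real) ^ n \<le> 1 / real n"
        using N[of n] n by (simp add: field_simps)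
      moreover have "0 \<le> 1 / real n" by simp
      ultimately show "15 * (51/50) * (102/115) ^ n \<le> 16 * (1 / real n)"
        by linarith
    qed simp
    also have "1 / real n \<le> ln (real n) / real n powr (1 - \<eta>)"
    proof (rule frac_le)
      show "real n powr (1 - \<eta>) \<le> real n"
        using powr_mono[of "1 - \<eta>" 1 "real n"] n assms by simp
      show "1 \<le> ln (real n)"
        using n exp_le by (subst ln_ge_iff) auto
    qed (use n in auto)
    finally show "15 / (23/20) ^ n \<le> 16 * (50/51) ^ (n + 1) * (ln (real n) / real n powr (1 - \<eta>))"
      using n by (simp add: mult_ac)
  qed
qed

theorem lemma3p5:
  fixes \<eta> :: real
  assumes "\<eta> > 0"
  shows "\<exists>D::nat. D > 0 \<and> (\<exists>C::real. \<exists>N::nat. \<forall>n\<ge>N. \<forall>t.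
           D \<le> tsize t \<and> tsize t \<le> n \<longrightarrow>
           \<bar>fps_nth (S_fps t) n / fps_nth T_fps n - inverse (rho t ^ (n + 1))\<bar>
             \<le> C * inverse (rho t ^ (n + 1)) * (ln (real n) / real n powr (1 - \<eta>)))"
proof -
  obtain D where D: "D > 0"
    "\<And>t. D \<le> tsize t \<Longrightarrow> wt t * real (tsize t) * (4/3) ^ (tsize t + 1) \<le> 3/6400"
    using large_trees_small_weight by blast
  obtain N where N: "\<And>n. n \<ge> N \<Longrightarrow>
      15 / (23/20) ^ n \<le> 16 * (50/51) ^ (n + 1) * (ln (real n) / real n powr (1 - \<eta>))"
    using geometric_le_log_over_powr[OF assms] by blast
  have "\<bar>fps_nth (S_fps t) n / fps_nth T_fps n - inverse (rho t ^ (n + 1))\<bar>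
      \<le> 16 * inverse (rho t ^ (n + 1)) * (ln (real n) / real n powr (1 - \<eta>))"
    if n: "n \<ge> max 1 N" and t: "D \<le> tsize t" for n t
  proof -
    have "tsize t \<ge> 1" using D(1) t by simp
    have "(50/51) ^ (n + 1) \<le> inverse (rho t ^ (n + 1))"
      by (rule power_inverse_rho_ge[OF \<open>tsize t \<ge> 1\<close> D(2)[OF t]])
    moreover have "0 \<le> ln (real n) / real n powr (1 - \<eta>)" using n by simp
    ultimately have "16 * (50/51) ^ (n + 1) * (ln (real n) / real n powr (1 - \<eta>))
        \<le> 16 * inverse (rho t ^ (n + 1)) * (ln (real n) / real n powr (1 - \<eta>))"
      by (intro mult_right_mono) auto
    moreover have "\<bar>fps_nth (S_fps t) n - 1 / rho t ^ (n + 1)\<bar> \<le> 15 / (23/20) ^ n"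
      using S_fps_coeff_close[OF \<open>tsize t \<ge> 1\<close> D(2)[OF t]] n by simp
    ultimately show ?thesis
      using N[of n] n by (simp add: T_fps_nth inverse_eq_divide)
  qed
  then show ?thesis
    using D(1) by blast
qed

end
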